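(* Let $N\ge 1$, $a\in\mathbb{R}^N$ with all $a_i\neq 0$, $\underline x<\overline x$, $\underline y<\overline y$ in $\mathbb{R}^N$, and $\mathcal{S}_a=\{(x,y)\in\mathbb{R}^N\times\mathbb{R}^N: \sum_{i=1}^N a_ix_iy_i=0,\ \underline x\le x\le\overline x,\ \underline y\le y\le\overline y\}$. Then every extreme point $(x,y)$ of $\mathcal{S}_a$ belongs to one of the sets $D_0,D_1,\dots,D_N$, where $D_0=\{(x,y)\in\mathcal{S}_a:\ x_i\in\{\underline x_i,\overline x_i\},\ y_i\in\{\underline y_i,\overline y_i\}\ \forall i\}$ and, for $k=1,\dots,N$, $D_k=\{(x,y)\in\mathcal{S}_a:\ x_i\in\{\underline x_i,\overline x_i\},\ y_i\in\{\underline y_i,\overline y_i\}\ \forall i\neq k,\ x_ky_k=-\tfrac{1}{a_k}\sum_{i\neq k}a_ix_iy_i\}$. Equivalently, there is at most one index $k$ such that $(x_k,y_k)$ is not a vertex of $[\underline x_k,\overline x_k]\times[\underline y_k,\overline y_k]$. *)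

theory Defs
  imports "HOL-Analysis.Analysis"
begin

definition S_a :: "(real^'n) \<Rightarrow> (real^'n) \<Rightarrow> (real^'n) \<Rightarrow> (real^'n) \<Rightarrow> (real^'n)
                   \<Rightarrow> ((real^'n) \<times> (real^'n)) set" where
  "S_a a xl xu yl yu = {(x, y). (\<Sum>i\<in>UNIV. a$i * x$i * y$i) = 0 \<and>
      (\<forall>i. xl$i \<le> x$i \<and> x$i \<le> xu$i) \<and> (\<forall>i. yl$i \<le> y$i \<and> y$i \<le> yu$i)}"

definition D0 :: "(real^'n) \<Rightarrow> (real^'n) \<Rightarrow> (real^'n) \<Rightarrow> (real^'n) \<Rightarrow> (real^'n)
                   \<Rightarrow> ((real^'n) \<times> (real^'n)) set" where
  "D0 a xl xu yl yu = {(x, y) \<in> S_a a xl xu yl yu.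
      \<forall>i. x$i \<in> {xl$i, xu$i} \<and> y$i \<in> {yl$i, yu$i}}"

definition Dk :: "(real^'n) \<Rightarrow> (real^'n) \<Rightarrow> (real^'n) \<Rightarrow> (real^'n) \<Rightarrow> (real^'n) \<Rightarrow> 'n
                   \<Rightarrow> ((real^'n) \<times> (real^'n)) set" where
  "Dk a xl xu yl yu k = {(x, y) \<in> S_a a xl xu yl yu.
      (\<forall>i. i \<noteq> k \<longrightarrow> x$i \<in> {xl$i, xu$i} \<and> y$i \<in> {yl$i, yu$i}) \<and>
      x$k * y$k = - (1 / a$k) * (\<Sum>i\<in>UNIV - {k}. a$i * x$i * y$i)}"

end

theory Submission
  imports Defs
begin

text \<open>
  If (x_i, y_i) is not a vertex of its box, then one of x_i, y_i is interior, so moving only that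
  coordinate keeps (x, y) in the box and changes the term a_i x_i y_i linearly. Two such indices give
  two linear changes, and a nontrivial combination of them keeps the constraint sum at zero; since
  x and y are never moved in the same coordinate, there is no quadratic term. This yields a segment
  through (x, y) inside S_a, so an extreme point has at most one non-vertex index, and the constraint
  then determines x_k y_k.
\<close>

lemma extreme_point_of_symmetric_perturbation:
  fixes z v :: "'a::real_vector"
  assumes "z extreme_point_of S" "z + v \<in> S" "z - v \<in> S"
  shows "v = 0"
proof (rule ccontr)
  assume "v \<noteq> 0"
  then have "v \<noteq> - v"
    by (simp add: eq_neg_iff_add_eq_0 scaleR_2[symmetric])
  then have "z + v \<noteq> z - v"
    by (metis add_left_cancel diff_conv_add_uminus)
  moreover have "midpoint (z + v) (z - v) = z"
    by (simp add: midpoint_def scaleR_add_right[symmetric])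
  ultimately have "z \<in> open_segment (z + v) (z - v)"
    by (metis midpoint_in_open_segment)
  then show False
    using assms by (auto simp: extreme_point_of_def)
qed

lemma box_nonvertex_axis_direction:
  fixes xl x xu yl y yu :: real
  assumes "xl \<le> x \<and> x \<le> xu" "yl \<le> y \<and> y \<le> yu"
    and "\<not> (x \<in> {xl, xu} \<and> y \<in> {yl, yu})"
  obtains p q e where "(p, q) \<in> {(1, 0), (0, 1)}" "e > 0"
    "\<And>d. \<bar>d\<bar> \<le> e \<Longrightarrow> xl \<le> x + d * p \<and> x + d * p \<le> xu \<and> yl \<le> y + d * q \<and> y + d * q \<le> yu"
proof (cases "x \<in> {xl, xu}")
  case False
  then have "xl < x" "x < xu" using assms by auto
  then show ?thesis
    using that[of 1 0 "min (x - xl) (xu - x)"] assms by (auto simp: abs_le_iff)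
next
  case True
  then have "yl < y" "y < yu" using assms by auto
  then show ?thesis
    using that[of 0 1 "min (y - yl) (yu - y)"] assms by (auto simp: abs_le_iff)
qed

lemma bounded_nontrivial_linear_dependence:
  fixes c1 c2 :: real
  obtains s t where "s * c1 + t * c2 = 0" "s \<noteq> 0 \<or> t \<noteq> 0" "\<bar>s\<bar> \<le> 1" "\<bar>t\<bar> \<le> 1"
proof (cases "c1 = 0 \<and> c2 = 0")
  case True
  then show ?thesis using that[of 1 0] by auto
next
  case False
  define M where "M = \<bar>c1\<bar> + \<bar>c2\<bar>"
  have M: "M > 0" "\<bar>c1\<bar> \<le> M" "\<bar>c2\<bar> \<le> M" using False by (auto simp: M_def)
  show ?thesis
  proof (rule that[of "c2 / M" "- c1 / M"])
    show "c2 / M * c1 + - c1 / M * c2 = 0" by (simp add: field_simps)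
    show "c2 / M \<noteq> 0 \<or> - c1 / M \<noteq> 0" using False M by auto
    show "\<bar>c2 / M\<bar> \<le> 1" "\<bar>- c1 / M\<bar> \<le> 1" using M by (simp_all add: abs_divide)
  qed
qed

lemma sum_weighted_product_add:
  fixes a x y u v :: "real^'n"
  assumes "\<And>i. u$i * v$i = 0"
  shows "(\<Sum>i\<in>UNIV. a$i * (x + u)$i * (y + v)$i)
       = (\<Sum>i\<in>UNIV. a$i * x$i * y$i) + (\<Sum>i\<in>UNIV. a$i * (u$i * y$i + v$i * x$i))"
proof -
  have "a$i * (x + u)$i * (y + v)$i = a$i * x$i * y$i + a$i * (u$i * y$i + v$i * x$i) + a$i * (u$i * v$i)"
    for i by (simp add: algebra_simps)
  then show ?thesis
    using assms by (simp add: sum.distrib)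
qed

lemma S_a_add_mem:
  fixes a xl xu yl yu x y u v :: "real^'n"
  assumes "(x, y) \<in> S_a a xl xu yl yu"
    and "\<And>i. u$i * v$i = 0"
    and "(\<Sum>i\<in>UNIV. a$i * (u$i * y$i + v$i * x$i)) = 0"
    and "\<And>i. xl$i \<le> x$i + u$i \<and> x$i + u$i \<le> xu$i \<and> yl$i \<le> y$i + v$i \<and> y$i + v$i \<le> yu$i"
  shows "(x + u, y + v) \<in> S_a a xl xu yl yu"
  using assms sum_weighted_product_add[of u v a x y, OF assms(2)] by (simp add: S_a_def)

lemma S_a_symmetric_segment_at_two_nonvertex_indices:
  fixes a xl xu yl yu x y :: "real^'n"
  assumes in_S: "(x, y) \<in> S_a a xl xu yl yu"
    and jk: "j \<noteq> k"
    and nj: "\<not> (x$j \<in> {xl$j, xu$j} \<and> y$j \<in> {yl$j, yu$j})"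
    and nk: "\<not> (x$k \<in> {xl$k, xu$k} \<and> y$k \<in> {yl$k, yu$k})"
  obtains u v where "(u, v) \<noteq> 0" "(x + u, y + v) \<in> S_a a xl xu yl yu" "(x - u, y - v) \<in> S_a a xl xu yl yu"
proof -
  have box_x: "\<And>i. xl$i \<le> x$i \<and> x$i \<le> xu$i" and box_y: "\<And>i. yl$i \<le> y$i \<and> y$i \<le> yu$i"
    using in_S by (auto simp: S_a_def)
  obtain pj qj ej where dirj: "(pj, qj) \<in> {(1, 0), (0, 1)}" "ej > 0" and boxj: "\<And>d. \<bar>d\<bar> \<le> ej \<Longrightarrow>
      xl$j \<le> x$j + d * pj \<and> x$j + d * pj \<le> xu$j \<and> yl$j \<le> y$j + d * qj \<and> y$j + d * qj \<le> yu$j"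
    using box_nonvertex_axis_direction[OF box_x box_y nj] by blast
  obtain pk qk ek where dirk: "(pk, qk) \<in> {(1, 0), (0, 1)}" "ek > 0" and boxk: "\<And>d. \<bar>d\<bar> \<le> ek \<Longrightarrow>
      xl$k \<le> x$k + d * pk \<and> x$k + d * pk \<le> xu$k \<and> yl$k \<le> y$k + d * qk \<and> y$k + d * qk \<le> yu$k"
    using box_nonvertex_axis_direction[OF box_x box_y nk] by blast
  define cj where "cj = a$j * (pj * y$j + qj * x$j)"
  define ck where "ck = a$k * (pk * y$k + qk * x$k)"
  obtain s t where st: "s * cj + t * ck = 0" "s \<noteq> 0 \<or> t \<noteq> 0" "\<bar>s\<bar> \<le> 1" "\<bar>t\<bar> \<le> 1"
    by (rule bounded_nontrivial_linear_dependence)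
  define e where "e = min ej ek"
  have e: "e > 0" "e \<le> ej" "e \<le> ek" using dirj dirk by (auto simp: e_def)
  define u :: "real^'n" where "u = (\<chi> i. if i = j then s * pj else if i = k then t * pk else 0)"
  define v :: "real^'n" where "v = (\<chi> i. if i = j then s * qj else if i = k then t * qk else 0)"
  have u_nth: "u$i = (if i = j then s * pj else if i = k then t * pk else 0)"
   and v_nth: "v$i = (if i = j then s * qj else if i = k then t * qk else 0)" for i
    by (simp_all add: u_def v_def)
  have uv: "(d *\<^sub>R u)$i * (d *\<^sub>R v)$i = 0" for d i
    using dirj dirk by (auto simp: u_nth v_nth)
  have "a$i * (u$i * y$i + v$i * x$i) = (if i = j then s * cj else 0) + (if i = k then t * ck else 0)" for i
    using jk by (simp add: u_nth v_nth cj_def ck_def algebra_simps)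
  then have "(\<Sum>i\<in>UNIV. a$i * (u$i * y$i + v$i * x$i)) = 0"
    using st(1) by (simp add: sum.distrib)
  moreover have "(\<Sum>i\<in>UNIV. a$i * ((d *\<^sub>R u)$i * y$i + (d *\<^sub>R v)$i * x$i))
      = d * (\<Sum>i\<in>UNIV. a$i * (u$i * y$i + v$i * x$i))" for d
    by (simp add: sum_distrib_left algebra_simps)
  ultimately have first_order: "(\<Sum>i\<in>UNIV. a$i * ((d *\<^sub>R u)$i * y$i + (d *\<^sub>R v)$i * x$i)) = 0" for d
    by simp
  have perturbed_in_S: "(x + d *\<^sub>R u, y + d *\<^sub>R v) \<in> S_a a xl xu yl yu" if d: "\<bar>d\<bar> \<le> e" for d
  proof (rule S_a_add_mem[OF in_S uv first_order])
    have "\<bar>d * s\<bar> \<le> \<bar>d\<bar>" "\<bar>d * t\<bar> \<le> \<bar>d\<bar>"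
      using st(3,4) by (simp_all add: abs_mult mult_left_le)
    then have "\<bar>d * s\<bar> \<le> ej" "\<bar>d * t\<bar> \<le> ek"
      using d e by linarith+
    then show "xl$i \<le> x$i + (d *\<^sub>R u)$i \<and> x$i + (d *\<^sub>R u)$i \<le> xu$i \<and>
               yl$i \<le> y$i + (d *\<^sub>R v)$i \<and> y$i + (d *\<^sub>R v)$i \<le> yu$i" for i
      using boxj[of "d * s"] boxk[of "d * t"] box_x[of i] box_y[of i] jk
      by (simp add: u_nth v_nth mult.assoc)
  qed
  show ?thesis
  proof (rule that)
    show "(x + e *\<^sub>R u, y + e *\<^sub>R v) \<in> S_a a xl xu yl yu"
      using perturbed_in_S[of e] e by simp
    show "(x - e *\<^sub>R u, y - e *\<^sub>R v) \<in> S_a a xl xu yl yu"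
      using perturbed_in_S[of "- e"] e by simp
    show "(e *\<^sub>R u, e *\<^sub>R v) \<noteq> 0"
    proof
      assume "(e *\<^sub>R u, e *\<^sub>R v) = 0"
      then have "u$j = 0" "v$j = 0" "u$k = 0" "v$k = 0"
        using e by (simp_all add: zero_prod_def)
      then show False
        using st(2) dirj dirk jk by (auto simp: u_nth v_nth)
    qed
  qed
qed

lemma extreme_point_of_S_a_nonvertex_unique:
  fixes a xl xu yl yu x y :: "real^'n"
  assumes ext: "(x, y) extreme_point_of (S_a a xl xu yl yu)"
    and nj: "\<not> (x$j \<in> {xl$j, xu$j} \<and> y$j \<in> {yl$j, yu$j})"
    and nk: "\<not> (x$k \<in> {xl$k, xu$k} \<and> y$k \<in> {yl$k, yu$k})"
  shows "j = k"
proof (rule ccontr)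
  assume "j \<noteq> k"
  moreover have "(x, y) \<in> S_a a xl xu yl yu"
    using ext by (simp add: extreme_point_of_def)
  ultimately obtain u v where "(u, v) \<noteq> 0"
    "(x, y) + (u, v) \<in> S_a a xl xu yl yu" "(x, y) - (u, v) \<in> S_a a xl xu yl yu"
    using nj nk by (auto elim: S_a_symmetric_segment_at_two_nonvertex_indices)
  then show False
    using extreme_point_of_symmetric_perturbation[OF ext] by blast
qed

theorem corollary2:
  fixes a xl xu yl yu x y :: "real^'n"
  assumes "\<forall>i. a$i \<noteq> 0"
    and "\<forall>i. xl$i < xu$i"
    and "\<forall>i. yl$i < yu$i"
    and "(x, y) extreme_point_of (S_a a xl xu yl yu)"
  shows "(x, y) \<in> D0 a xl xu yl yu \<or> (\<exists>k. (x, y) \<in> Dk a xl xu yl yu k)"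
proof -
  have in_S: "(x, y) \<in> S_a a xl xu yl yu"
    using assms(4) by (simp add: extreme_point_of_def)
  show ?thesis
  proof (cases "\<forall>i. x$i \<in> {xl$i, xu$i} \<and> y$i \<in> {yl$i, yu$i}")
    case True
    then show ?thesis using in_S by (simp add: D0_def)
  next
    case False
    then obtain k where nk: "\<not> (x$k \<in> {xl$k, xu$k} \<and> y$k \<in> {yl$k, yu$k})" by blast
    have vertex_elsewhere: "\<forall>i. i \<noteq> k \<longrightarrow> x$i \<in> {xl$i, xu$i} \<and> y$i \<in> {yl$i, yu$i}"
      using extreme_point_of_S_a_nonvertex_unique[OF assms(4) _ nk] by blast
    have "(\<Sum>i\<in>UNIV. a$i * x$i * y$i) = 0"
      using in_S by (simp add: S_a_def)
    then have "a$k * x$k * y$k + (\<Sum>i\<in>UNIV - {k}. a$i * x$i * y$i) = 0"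
      by (simp add: sum.remove[of UNIV k])
    then have "x$k * y$k = - (1 / a$k) * (\<Sum>i\<in>UNIV - {k}. a$i * x$i * y$i)"
      using assms(1) by (simp add: field_simps)
    then show ?thesis
      using in_S vertex_elsewhere by (auto simp: Dk_def)
  qed
qed

end
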